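(* Suppose that Assumptions (A1) and (A2) hold. Then there is a constant $C>0$ depending only on $\alpha$, $\gamma$, the constants in (A1) and (A2), and $\|V\|_{L^\infty}$ (independent of $\epsilon\in(0,1]$) such that every solution $(u,m)$ of Problem 1 satisfies $\int_0^1 m\,dx\le C$.
   Context: Let $\mathbb{T}=\mathbb{R}/\mathbb{Z}$ be the one-dimensional torus; functions on $\mathbb{T}$ are identified with $1$-periodic functions on $\mathbb{R}$, and integrals over $\mathbb{T}$ are written $\int_0^1$. Let $H:\mathbb{R}\to\mathbb{R}$ be of class $C^2$, $V:\mathbb{T}\to\mathbb{R}$ continuous, $\alpha>0$, and $0<\epsilon\le 1$. We say $(u,m)$ solves Problem 1 if $u,m\in C^2(\mathbb{T})$, $m>0$ on $\mathbb{T}$, and on $\mathbb{T}$: $$u-u_{xx}+H(u_x)+V(x)=m^\alpha+\epsilon(m-m_{xx}),\qquad m-m_{xx}-(H'(u_x)m)_x=1-\epsilon(u-u_{xx}).$$ Assumptions: (A1) there exist constants $C_1,C_2,C_3>0$ and $\gamma>1$ such that $-C_1+C_2|p|^\gamma\le H(p)\le C_1+C_3|p|^\gamma$ for all $p\in\mathbb{R}$. (A2) There exist constants $\tilde C_1,\tilde C_2,\tilde C_3>0$ such that $-\tilde C_1+\tilde C_2|p|^\gamma\le pH'(p)-H(p)\le \tilde C_1+\tilde C_3|p|^\gamma$ for all $p$ (same $\gamma$ as in (A1)). *)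

theory Defs
  imports "HOL-Analysis.Analysis"
begin

text \<open>Functions on the torus R/Z are identified with 1-periodic functions on R.\<close>
definition periodic1 :: "(real \<Rightarrow> real) \<Rightarrow> bool" where
  "periodic1 f \<longleftrightarrow> (\<forall>x. f (x + 1) = f x)"

definition C2 :: "(real \<Rightarrow> real) \<Rightarrow> bool" where
  "C2 f \<longleftrightarrow> (\<forall>x. f differentiable (at x)) \<and> (\<forall>x. deriv f differentiable (at x))
           \<and> continuous_on UNIV (deriv (deriv f))"

definition sup_norm_T :: "(real \<Rightarrow> real) \<Rightarrow> real" where
  "sup_norm_T V = (SUP x\<in>{0..1}. \<bar>V x\<bar>)"

definition solves_problem1 ::
  "(real \<Rightarrow> real) \<Rightarrow> (real \<Rightarrow> real) \<Rightarrow> real \<Rightarrow> real \<Rightarrow> (real \<Rightarrow> real) \<Rightarrow> (real \<Rightarrow> real) \<Rightarrow> bool" where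
  "solves_problem1 H V \<alpha> \<epsilon> u m \<longleftrightarrow>
     C2 u \<and> C2 m \<and> periodic1 u \<and> periodic1 m \<and> (\<forall>x. m x > 0) \<and>
     (\<forall>x. u x - deriv (deriv u) x + H (deriv u x) + V x
            = m x powr \<alpha> + \<epsilon> * (m x - deriv (deriv m) x)) \<and>
     (\<forall>x. m x - deriv (deriv m) x - deriv (\<lambda>y. deriv H (deriv u y) * m y) x
            = 1 - \<epsilon> * (u x - deriv (deriv u) x))"

end

theory Submission
  imports Defs
begin

text \<open>
  Integrating the second equation over the torus gives the mass identity
  \<open>\<integral>m - 1 + \<epsilon>\<integral>u = 0\<close>. Multiplying the first equation by \<open>m\<close>, the second by \<open>u\<close>
  and subtracting, all derivative terms integrate to zero, and (A2) together with
  \<open>V \<le> \<parallel>V\<parallel>\<^sub>\<infinity>\<close> yields \<open>-\<integral>u + \<epsilon>\<integral>u\<^sup>2 \<le> K\<integral>m\<close> where \<open>K\<close> is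
  \<open>\<parallel>V\<parallel>\<^sub>\<infinity>\<close> plus the constant bounding \<open>H(p) - pH'(p)\<close> in (A2).
  Eliminating \<open>\<epsilon>\<integral>u = 1 - \<integral>m\<close> and using Jensen's inequality \<open>(\<integral>u)\<^sup>2 \<le> \<integral>u\<^sup>2\<close> leads
  to \<open>\<integral>m (\<integral>m - 1) \<le> K \<integral>m\<close>, hence \<open>\<integral>m \<le> 1 + K\<close>.
\<close>

lemma C2_has_real_derivative:
  assumes "C2 f"
  shows "(f has_real_derivative deriv f x) (at x)"
    and "(deriv f has_real_derivative deriv (deriv f) x) (at x)"
  using assms unfolding C2_def by (auto simp: DERIV_deriv_iff_real_differentiable)

lemma periodic1_deriv:
  assumes "periodic1 f" and "\<And>x. f differentiable at x"
  shows "periodic1 (deriv f)"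
  unfolding periodic1_def
proof
  fix x
  have shift: "(\<lambda>y. f (y + 1)) = f"
    using assms(1) unfolding periodic1_def by auto
  have "(f has_real_derivative deriv f (x + 1)) (at (x + 1))"
    using assms(2) DERIV_deriv_iff_real_differentiable by blast
  then have "(f has_real_derivative deriv f (x + 1)) (at x)"
    by (simp add: DERIV_shift shift)
  moreover have "(f has_real_derivative deriv f x) (at x)"
    using assms(2) DERIV_deriv_iff_real_differentiable by blast
  ultimately show "deriv f (x + 1) = deriv f x"
    by (rule DERIV_unique)
qed

lemma has_integral_deriv_periodic1:
  assumes "periodic1 f" and "\<And>x. (f has_real_derivative f' x) (at x)"
  shows "(f' has_integral 0) {0..1}"
proof -
  have "(f' has_integral (f 1 - f 0)) {0..1}"
    using assms(2)
    by (intro fundamental_theorem_of_calculus)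
       (auto simp: has_real_derivative_iff_has_vector_derivative[symmetric] intro: DERIV_subset)
  moreover have "f 1 = f 0"
    using assms(1) unfolding periodic1_def by (metis add_0)
  ultimately show ?thesis by simp
qed

lemma square_integral_le_integral_square:
  fixes f :: "real \<Rightarrow> real"
  assumes "continuous_on {0..1} f"
  shows "(integral {0..1} f)\<^sup>2 \<le> integral {0..1} (\<lambda>x. (f x)\<^sup>2)"
proof -
  define B where "B = integral {0..1} f"
  define S where "S = integral {0..1} (\<lambda>x. (f x)\<^sup>2)"
  have "(f has_integral B) {0..1}"
    unfolding B_def using assms by (intro integrable_integral integrable_continuous_interval)
  moreover have "((\<lambda>x. (f x)\<^sup>2) has_integral S) {0..1}"
    unfolding S_def using assms
    by (intro integrable_integral integrable_continuous_interval continuous_intros)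
  ultimately have "((\<lambda>x. (f x)\<^sup>2 - 2 * B * f x + B\<^sup>2) has_integral (S - 2 * B * B + B\<^sup>2)) {0..1}"
    using has_integral_const_real[of "B\<^sup>2" 0 1]
    by (intro has_integral_add has_integral_diff has_integral_mult_right) auto
  moreover have "(\<lambda>x. (f x)\<^sup>2 - 2 * B * f x + B\<^sup>2) = (\<lambda>x. (f x - B)\<^sup>2)"
    by (simp add: fun_eq_iff power2_diff)
  ultimately have "((\<lambda>x. (f x - B)\<^sup>2) has_integral (S - 2 * B * B + B\<^sup>2)) {0..1}"
    by simp
  then have "0 \<le> S - 2 * B * B + B\<^sup>2"
    by (rule has_integral_nonneg) simp
  then show ?thesis
    unfolding B_def[symmetric] S_def[symmetric] by (simp add: power2_eq_square)
qed

lemma abs_le_sup_norm_T: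
  assumes "continuous_on {0..1} V" and "x \<in> {0..1}"
  shows "\<bar>V x\<bar> \<le> sup_norm_T V"
proof -
  have "bdd_above ((\<lambda>x. \<bar>V x\<bar>) ` {0..1})"
    using assms(1)
    by (intro bounded_imp_bdd_above compact_imp_bounded compact_continuous_image continuous_intros) auto
  then show ?thesis
    unfolding sup_norm_T_def using assms(2) by (rule cSUP_upper2) simp
qed

text \<open>
  With \<open>A = \<integral>m\<close>, \<open>B = \<integral>u\<close>, \<open>S = \<integral>u\<^sup>2\<close>: multiply the energy inequality by \<open>\<epsilon>\<close> and use
  \<open>\<epsilon>\<^sup>2 S \<ge> (\<epsilon>B)\<^sup>2 = (1 - A)\<^sup>2\<close>.
\<close>
lemma mass_bound_of_identities:
  fixes A B S \<epsilon> K :: real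
  assumes mass: "A - 1 + \<epsilon> * B = 0" and energy: "- B + \<epsilon> * S \<le> K * A"
    and Jensen: "B\<^sup>2 \<le> S" and "0 \<le> A" and "0 < \<epsilon>" and "\<epsilon> \<le> 1" and "0 \<le> K"
  shows "A \<le> 1 + K"
proof -
  have "\<epsilon> * B = 1 - A"
    using mass by linarith
  have "(1 - A)\<^sup>2 \<le> \<epsilon>\<^sup>2 * S"
    using mult_left_mono[OF Jensen, of "\<epsilon>\<^sup>2"] \<open>\<epsilon> * B = 1 - A\<close>
    by (metis power_mult_distrib zero_le_power2)
  moreover have "\<epsilon> * (- B + \<epsilon> * S) \<le> \<epsilon> * (K * A)"
    using energy \<open>0 < \<epsilon>\<close> by (simp add: mult_left_mono)
  moreover have "\<epsilon> * (K * A) \<le> K * A"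
    using assms(4-7) by (simp add: mult_left_le_one_le)
  ultimately have "A * (A - 1 - K) \<le> 0"
    using \<open>\<epsilon> * B = 1 - A\<close> by (simp add: algebra_simps power2_eq_square)
  then show ?thesis
    using \<open>0 \<le> A\<close> \<open>0 \<le> K\<close> by (cases "A = 0") (auto simp: mult_le_0_iff)
qed

locale problem1_solution =
  fixes H V :: "real \<Rightarrow> real" and \<alpha> \<epsilon> :: real and u m :: "real \<Rightarrow> real"
  assumes C2_H: "C2 H" and solves: "solves_problem1 H V \<alpha> \<epsilon> u m"
begin

lemma C2_u: "C2 u" and C2_m: "C2 m" and periodic_u: "periodic1 u" and periodic_m: "periodic1 m"
  and m_pos: "m x > 0"
  and HJ_equation: "u x - deriv (deriv u) x + H (deriv u x) + V x
                      = m x powr \<alpha> + \<epsilon> * (m x - deriv (deriv m) x)"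
  using solves unfolding solves_problem1_def by auto

definition flux :: "real \<Rightarrow> real" where
  "flux y = deriv H (deriv u y) * m y"

lemma FP_equation:
  "m x - deriv (deriv m) x - deriv flux x = 1 - \<epsilon> * (u x - deriv (deriv u) x)"
proof -
  have "flux = (\<lambda>y. deriv H (deriv u y) * m y)"
    by (simp add: fun_eq_iff flux_def)
  then show ?thesis
    using solves unfolding solves_problem1_def by simp
qed

lemmas u_derivatives = C2_has_real_derivative[OF C2_u]
lemmas m_derivatives = C2_has_real_derivative[OF C2_m]

lemma flux_has_derivative: "(flux has_real_derivative deriv flux x) (at x)"
proof -
  have "(\<lambda>y. deriv H (deriv u y)) differentiable at x"
    using DERIV_chain2[OF C2_has_real_derivative(2)[OF C2_H] u_derivatives(2)]
    by (auto simp: real_differentiable_def)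
  moreover have "m differentiable at x"
    using m_derivatives(1) by (auto simp: real_differentiable_def)
  ultimately have "flux differentiable at x"
    unfolding flux_def[abs_def] by (rule differentiable_mult)
  then show ?thesis
    by (simp add: DERIV_deriv_iff_real_differentiable)
qed

lemma periodic_deriv_u: "periodic1 (deriv u)"
  using periodic1_deriv[OF periodic_u] C2_u unfolding C2_def by blast

lemma periodic_deriv_m: "periodic1 (deriv m)"
  using periodic1_deriv[OF periodic_m] C2_m unfolding C2_def by blast

lemma periodic_flux: "periodic1 flux"
  using periodic_deriv_u periodic_m unfolding periodic1_def flux_def by simp

lemma continuous_u: "continuous_on A u" and continuous_m: "continuous_on A m"
  using u_derivatives(1) m_derivatives(1)
  by (meson DERIV_continuous continuous_at_imp_continuous_on)+

lemma has_integral_u: "(u has_integral integral {0..1} u) {0..1}"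
  and has_integral_m: "(m has_integral integral {0..1} m) {0..1}"
  and has_integral_u_square: "((\<lambda>x. (u x)\<^sup>2) has_integral integral {0..1} (\<lambda>x. (u x)\<^sup>2)) {0..1}"
  by (intro integrable_integral integrable_continuous_interval continuous_intros
        continuous_u continuous_m)+

lemma mass_identity: "integral {0..1} m - 1 + \<epsilon> * integral {0..1} u = 0"
proof -
  have "((\<lambda>x. deriv m x + flux x + \<epsilon> * deriv u x) has_real_derivative
          m x - 1 + \<epsilon> * u x) (at x)" for x
    using FP_equation[of x]
    by (auto intro!: derivative_eq_intros m_derivatives u_derivatives flux_has_derivative
             simp: algebra_simps)
  then have "((\<lambda>x. m x - 1 + \<epsilon> * u x) has_integral 0) {0..1}"
    using periodic_deriv_m periodic_flux periodic_deriv_u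
    by (intro has_integral_deriv_periodic1[where f = "\<lambda>x. deriv m x + flux x + \<epsilon> * deriv u x"])
       (auto simp: periodic1_def)
  moreover have "((\<lambda>x. m x - 1 + \<epsilon> * u x) has_integral
                   integral {0..1} m - 1 + \<epsilon> * integral {0..1} u) {0..1}"
    using has_integral_const_real[of 1 0 1]
    by (intro has_integral_add has_integral_diff has_integral_mult_right has_integral_m has_integral_u)
       auto
  ultimately show ?thesis
    using has_integral_unique by blast
qed

text \<open>
  \<open>Q\<close> is chosen so that \<open>-u + \<epsilon>u\<^sup>2 - Q'\<close> equals \<open>m\<close> times the first equation minus \<open>u\<close>
  times the second, with all second derivatives eliminated.
\<close>
lemma energy_inequality:
  assumes "0 \<le> \<epsilon>" and A2: "\<And>p. H p - p * deriv H p \<le> D" and V_le: "\<And>x. x \<in> {0..1} \<Longrightarrow> V x \<le> M"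
  shows "- integral {0..1} u + \<epsilon> * integral {0..1} (\<lambda>x. (u x)\<^sup>2) \<le> (D + M) * integral {0..1} m"
proof -
  define E where "E x = m x * (H (deriv u x) - deriv u x * deriv H (deriv u x)) + V x * m x
                        - m x powr \<alpha> * m x - \<epsilon> * ((m x)\<^sup>2 + (deriv m x)\<^sup>2 + (deriv u x)\<^sup>2)" for x
  define Q where "Q x = u x * deriv m x - deriv u x * m x + flux x * u x
                        + \<epsilon> * (m x * deriv m x + u x * deriv u x)" for x
  have "(Q has_real_derivative - u x + \<epsilon> * (u x)\<^sup>2 - E x) (at x)" for x
  proof -
    have HJ: "H (deriv u x) = m x powr \<alpha> + \<epsilon> * (m x - deriv (deriv m) x) - u x + deriv (deriv u) x - V x"
      using HJ_equation[of x] by linarith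
    have FP: "deriv flux x = m x - deriv (deriv m) x - 1 + \<epsilon> * (u x - deriv (deriv u) x)"
      using FP_equation[of x] by linarith
    show ?thesis
      unfolding Q_def[abs_def]
      by (auto intro!: derivative_eq_intros m_derivatives u_derivatives flux_has_derivative
               simp: E_def HJ FP flux_def[of x] algebra_simps power2_eq_square)
  qed
  then have "((\<lambda>x. - u x + \<epsilon> * (u x)\<^sup>2 - E x) has_integral 0) {0..1}"
    using periodic_u periodic_m periodic_deriv_u periodic_deriv_m periodic_flux
    by (intro has_integral_deriv_periodic1[where f = Q]) (auto simp: periodic1_def Q_def)
  then have "((\<lambda>x. (- u x + \<epsilon> * (u x)\<^sup>2) - (- u x + \<epsilon> * (u x)\<^sup>2 - E x)) has_integral
              - integral {0..1} u + \<epsilon> * integral {0..1} (\<lambda>x. (u x)\<^sup>2) - 0) {0..1}"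
    by (intro has_integral_diff has_integral_add has_integral_neg has_integral_mult_right
          has_integral_u has_integral_u_square)
  then have "(E has_integral - integral {0..1} u + \<epsilon> * integral {0..1} (\<lambda>x. (u x)\<^sup>2)) {0..1}"
    by simp
  moreover have "((\<lambda>x. (D + M) * m x) has_integral (D + M) * integral {0..1} m) {0..1}"
    by (intro has_integral_mult_right has_integral_m)
  moreover have "E x \<le> (D + M) * m x" if "x \<in> {0..1}" for x
  proof -
    have "m x * (H (deriv u x) - deriv u x * deriv H (deriv u x)) \<le> m x * D"
      using A2 m_pos by (simp add: mult_left_mono)
    moreover have "V x * m x \<le> M * m x"
      using V_le[OF that] m_pos by (simp add: mult_right_mono)
    moreover have "0 \<le> m x powr \<alpha> * m x" "0 \<le> \<epsilon> * ((m x)\<^sup>2 + (deriv m x)\<^sup>2 + (deriv u x)\<^sup>2)"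
      using m_pos[of x] \<open>0 \<le> \<epsilon>\<close> by auto
    ultimately show ?thesis
      unfolding E_def by (simp add: algebra_simps)
  qed
  ultimately show ?thesis
    by (rule has_integral_le)
qed

lemma mass_bound:
  assumes "0 < \<epsilon>" and "\<epsilon> \<le> 1" and "\<And>p. H p - p * deriv H p \<le> D"
    and "\<And>x. x \<in> {0..1} \<Longrightarrow> V x \<le> M" and "0 \<le> D + M"
  shows "integral {0..1} m \<le> 1 + (D + M)"
proof (rule mass_bound_of_identities)
  show "- integral {0..1} u + \<epsilon> * integral {0..1} (\<lambda>x. (u x)\<^sup>2) \<le> (D + M) * integral {0..1} m"
    using assms by (intro energy_inequality) auto
  show "(integral {0..1} u)\<^sup>2 \<le> integral {0..1} (\<lambda>x. (u x)\<^sup>2)"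
    by (intro square_integral_le_integral_square continuous_u)
  show "0 \<le> integral {0..1} m"
    using m_pos by (intro integral_nonneg integrable_continuous_interval continuous_m less_imp_le)
qed (use mass_identity assms in auto)

end

theorem mainTheorem4:
  fixes \<alpha> \<gamma> C\<^sub>1 C\<^sub>2 C\<^sub>3 D\<^sub>1 D\<^sub>2 D\<^sub>3 M :: real
  assumes "\<alpha> > 0" and "\<gamma> > 1"
    and "C\<^sub>1 > 0" and "C\<^sub>2 > 0" and "C\<^sub>3 > 0"
    and "D\<^sub>1 > 0" and "D\<^sub>2 > 0" and "D\<^sub>3 > 0"
  shows "\<exists>C>0. \<forall>(H :: real \<Rightarrow> real) (V :: real \<Rightarrow> real) \<epsilon> u m.
           C2 H
         \<and> (\<forall>p. - C\<^sub>1 + C\<^sub>2 * \<bar>p\<bar> powr \<gamma> \<le> H p \<and> H p \<le> C\<^sub>1 + C\<^sub>3 * \<bar>p\<bar> powr \<gamma>)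
         \<and> (\<forall>p. - D\<^sub>1 + D\<^sub>2 * \<bar>p\<bar> powr \<gamma> \<le> p * deriv H p - H p
                \<and> p * deriv H p - H p \<le> D\<^sub>1 + D\<^sub>3 * \<bar>p\<bar> powr \<gamma>)
         \<and> continuous_on UNIV V \<and> periodic1 V \<and> sup_norm_T V = M
         \<and> 0 < \<epsilon> \<and> \<epsilon> \<le> 1
         \<and> solves_problem1 H V \<alpha> \<epsilon> u m
         \<longrightarrow> integral {0..1} m \<le> C"
proof (intro exI[of _ "1 + (D\<^sub>1 + \<bar>M\<bar>)"] conjI allI impI)
  show "0 < 1 + (D\<^sub>1 + \<bar>M\<bar>)"
    using \<open>D\<^sub>1 > 0\<close> by simp
  fix H V :: "real \<Rightarrow> real" and \<epsilon> :: real and u m :: "real \<Rightarrow> real"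
  assume hyps: "C2 H
         \<and> (\<forall>p. - C\<^sub>1 + C\<^sub>2 * \<bar>p\<bar> powr \<gamma> \<le> H p \<and> H p \<le> C\<^sub>1 + C\<^sub>3 * \<bar>p\<bar> powr \<gamma>)
         \<and> (\<forall>p. - D\<^sub>1 + D\<^sub>2 * \<bar>p\<bar> powr \<gamma> \<le> p * deriv H p - H p
                \<and> p * deriv H p - H p \<le> D\<^sub>1 + D\<^sub>3 * \<bar>p\<bar> powr \<gamma>)
         \<and> continuous_on UNIV V \<and> periodic1 V \<and> sup_norm_T V = M
         \<and> 0 < \<epsilon> \<and> \<epsilon> \<le> 1
         \<and> solves_problem1 H V \<alpha> \<epsilon> u m"
  then interpret problem1_solution H V \<alpha> \<epsilon> u m
    by unfold_locales auto
  have "H p - p * deriv H p \<le> D\<^sub>1" for p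
    using hyps \<open>D\<^sub>2 > 0\<close> by (smt (verit) mult_nonneg_nonneg powr_ge_zero)
  moreover have "V x \<le> \<bar>M\<bar>" if "x \<in> {0..1}" for x
    using hyps abs_le_sup_norm_T[OF _ that, of V] continuous_on_subset by fastforce
  ultimately show "integral {0..1} m \<le> 1 + (D\<^sub>1 + \<bar>M\<bar>)"
    using hyps \<open>D\<^sub>1 > 0\<close> by (intro mass_bound) auto
qed

end
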